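(* There exists a unitary on $\mathbb{C}^2\otimes\mathbb{C}^2\otimes\mathbb{C}^2$ of the form $L_1\,C_1\,L_2\,C_2\,L_3\,C_3\,L_4$, where $L_1,\dots,L_4$ are local unitaries (each of the form $V\otimes W\otimes X$ with $V,W,X$ $2\times2$ unitaries) and $C_1,C_2,C_3$ are CNOT gates acting respectively on the qubit pairs $\{A,B\}$, $\{B,C\}$, $\{C,A\}$ (identity on the remaining qubit), whose Schmidt rank equals $7$.
   Context: $T=|0\rangle\langle0|\otimes I_2+|1\rangle\langle1|\otimes\sigma_1$ is the CNOT gate on two qubits (first control, second target), where $\sigma_1=\begin{bmatrix}0&1\\1&0\end{bmatrix}$. For a matrix $U$ on $\mathbb{C}^2\otimes\mathbb{C}^2\otimes\mathbb{C}^2$ (systems $A,B,C$), its Schmidt rank $\mathrm{sr}(U)$ is the least integer $r$ such that $U=\sum_{j=1}^r A_j\otimes B_j\otimes C_j$ with $A_j,B_j,C_j$ complex $2\times 2$ matrices (i.e. the tensor rank of $U$). *)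

theory Defs
  imports "HOL-Analysis.Analysis"
begin

text \<open>Complex 2x2 matrices are elements of type complex^2^2 (rows/columns indexed by the
  two-element type 2, whose elements 0 and 1 label the computational basis).
  Operators on C^2 (x) C^2 (x) C^2 (systems A, B, C) are 8x8 matrices indexed by
  the triple type 2 \<times> 2 \<times> 2, with the index (a,b,c) standing for |a>|b>|c>.\<close>

type_synonym mat2 = "complex^2^2"
type_synonym mat8 = "complex^(2\<times>2\<times>2)^(2\<times>2\<times>2)"

definition conj_transpose2 :: "mat2 \<Rightarrow> mat2" where
  "conj_transpose2 U = (\<chi> i j. cnj (U $ j $ i))"

definition unitary2 :: "mat2 \<Rightarrow> bool" where
  "unitary2 U \<longleftrightarrow> conj_transpose2 U ** U = mat 1 \<and> U ** conj_transpose2 U = mat 1"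

definition tensor3 :: "mat2 \<Rightarrow> mat2 \<Rightarrow> mat2 \<Rightarrow> mat8" where
  "tensor3 A B C = (\<chi> i j. A $ fst i $ fst j * B $ fst (snd i) $ fst (snd j)
                           * C $ snd (snd i) $ snd (snd j))"

definition local_unitary :: "mat8 \<Rightarrow> bool" where
  "local_unitary L \<longleftrightarrow> (\<exists>V W X. unitary2 V \<and> unitary2 W \<and> unitary2 X \<and> L = tensor3 V W X)"

definition proj0 :: mat2 where "proj0 = (\<chi> i j. if i = 0 \<and> j = 0 then 1 else 0)"
definition proj1 :: mat2 where "proj1 = (\<chi> i j. if i = 1 \<and> j = 1 then 1 else 0)"
definition id2 :: mat2 where "id2 = mat 1"
definition sigma1 :: mat2 where "sigma1 = (\<chi> i j. if i \<noteq> j then 1 else 0)"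

text \<open>CNOT gates T = |0><0| (x) I + |1><1| (x) sigma_1 on the ordered pairs (A,B), (B,C), (C,A)
  (first = control, second = target), identity on the remaining qubit.\<close>
definition CNOT_AB :: mat8 where
  "CNOT_AB = tensor3 proj0 id2 id2 + tensor3 proj1 sigma1 id2"
definition CNOT_BC :: mat8 where
  "CNOT_BC = tensor3 id2 proj0 id2 + tensor3 id2 proj1 sigma1"
definition CNOT_CA :: mat8 where
  "CNOT_CA = tensor3 id2 id2 proj0 + tensor3 sigma1 id2 proj1"

definition schmidt_rank :: "mat8 \<Rightarrow> nat" where
  "schmidt_rank U = (LEAST r. \<exists>A B C :: nat \<Rightarrow> mat2.
       U = (\<Sum>j<r. tensor3 (A j) (B j) (C j)))"

end

theory Submission
  imports Defs
begin

text \<open>With identity local unitaries, the three CNOT gates compose to the permutation matrix of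
  (a, b, c) |-> (a + c, a + b + c, b + c), which is a sum of seven product operators.

  For the lower bound, pair the A-factor with an operator l. The resulting 4x4 slice is, up to
  permuting rows and columns, the direct sum of two copies of the 2x2 matrix with rows
  (l00, l01) and (l11, l10), whose determinant is the nondegenerate quadratic form
  q(l) = l00 l10 - l01 l11. A decomposition into six product terms writes every slice as
  sum_j (l . a_j) b_j c_j^T. Four of the a_j form a basis; let alpha_m be the dual basis, so
  that only two further terms remain. If two of the alpha_m pair to zero with the last
  remaining a_j, their slices share a nonzero kernel and cokernel vector, which forces them to
  be proportional. Otherwise three of the alpha_m pair nontrivially with it; then suitable
  combinations of them have singular slices, so q vanishes on their three-dimensional span,
  which is impossible for a nondegenerate quadratic form in dimension four.\<close>

lemma numeral_2_eq_0: "(2::2) = 0"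
  by simp

lemma bit_cases: "(x::2) = 0 \<or> x = 1"
  using exhaust_2[of x] by (auto simp: numeral_2_eq_0)

lemma add_self_2 [simp]: "(x::2) + x = 0"
  using bit_cases[of x] by auto

lemma add_self_left_2 [simp]: "(x::2) + (x + y) = y"
  by (simp add: add.assoc[symmetric])

lemma add_one_one_2 [simp]: "(x::2) + 1 + 1 = x"
  using bit_cases[of x] by auto

lemma add_one_neq_2 [simp]: "(x::2) + 1 \<noteq> x"
  using bit_cases[of x] by auto

lemma bit_cases_shift: "(x::2) = i \<or> x = i + 1"
  using bit_cases[of x] bit_cases[of i] by auto

lemma sum_UNIV_2: "(\<Sum>x\<in>UNIV. f x) = f 0 + (f (1::2) :: 'a::comm_monoid_add)"
  by (simp add: sum_2 numeral_2_eq_0 add.commute)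

lemma sum_UNIV_2_shift: "(\<Sum>x\<in>UNIV. f x) = f (i::2) + (f (i + 1) :: 'a::comm_monoid_add)"
proof -
  have UNIV_eq: "UNIV = {i, i + 1}"
    using bit_cases_shift[of _ i] by auto
  have "i \<noteq> i + 1"
    using bit_cases[of i] by auto
  then show ?thesis
    unfolding UNIV_eq by simp
qed

lemma sum_UNIV_2x2:
  "(\<Sum>x\<in>UNIV. f x) = f (0,0) + f (0,1) + f (1,0) + (f (1::2, 1::2) :: 'a::comm_monoid_add)"
proof -
  have "(\<Sum>x\<in>UNIV. f x) = (\<Sum>a\<in>UNIV. \<Sum>b\<in>UNIV. f (a, b))"
    unfolding sum.cartesian_product by simp
  then show ?thesis
    by (simp add: sum_UNIV_2 add.assoc)
qed

section \<open>The CNOT cycle\<close>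

definition perm_matrix :: "('n \<Rightarrow> 'n) \<Rightarrow> 'a::zero_neq_one^'n^'n" where
  "perm_matrix f = (\<chi> i j. if i = f j then 1 else 0)"

lemma perm_matrix_mult:
  "perm_matrix f ** perm_matrix g = (perm_matrix (f \<circ> g) :: 'a::semiring_1^'n^'n)"
proof -
  have "(if i = f k then 1 else 0) * (if k = g j then 1 else 0)
      = (if k = g j then if i = f (g j) then 1 else 0 else (0::'a))" for i j k
    by simp
  then show ?thesis
    by (simp add: perm_matrix_def matrix_matrix_mult_def)
qed

lemma CNOT_AB_eq_perm_matrix: "CNOT_AB = perm_matrix (\<lambda>(a,b,c). (a, a + b, c))"
  by (auto simp: vec_eq_iff CNOT_AB_def perm_matrix_def tensor3_def proj0_def proj1_def
      id2_def sigma1_def mat_def forall_2)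

lemma CNOT_BC_eq_perm_matrix: "CNOT_BC = perm_matrix (\<lambda>(a,b,c). (a, b, b + c))"
  by (auto simp: vec_eq_iff CNOT_BC_def perm_matrix_def tensor3_def proj0_def proj1_def
      id2_def sigma1_def mat_def forall_2)

lemma CNOT_CA_eq_perm_matrix: "CNOT_CA = perm_matrix (\<lambda>(a,b,c). (a + c, b, c))"
  by (auto simp: vec_eq_iff CNOT_CA_def perm_matrix_def tensor3_def proj0_def proj1_def
      id2_def sigma1_def mat_def forall_2)

definition cnot_cycle :: mat8 where
  "cnot_cycle = CNOT_AB ** CNOT_BC ** CNOT_CA"

lemma cnot_cycle_eq_perm_matrix: "cnot_cycle = perm_matrix (\<lambda>(a,b,c). (a + c, a + b + c, b + c))"
  by (simp add: cnot_cycle_def CNOT_AB_eq_perm_matrix CNOT_BC_eq_perm_matrix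
      CNOT_CA_eq_perm_matrix perm_matrix_mult comp_def split_def ac_simps)

definition matrix2 :: "'a \<Rightarrow> 'a \<Rightarrow> 'a \<Rightarrow> 'a \<Rightarrow> 'a^2^2" where
  "matrix2 a b c d = (\<chi> i j. if i = 0 then if j = 0 then a else b else if j = 0 then c else d)"

lemma matrix2_entries [simp]:
  "matrix2 a b c d $ 0 $ 0 = a" "matrix2 a b c d $ 0 $ 1 = b"
  "matrix2 a b c d $ 1 $ 0 = c" "matrix2 a b c d $ 1 $ 1 = d"
  by (simp_all add: matrix2_def)

definition cycle_factors :: "(mat2 \<times> mat2 \<times> mat2) list" where
  "cycle_factors =
    [(matrix2 1 0 1 0, matrix2 1 1 0 0, matrix2 1 1 0 0),
     (matrix2 0 1 1 0, matrix2 1 0 0 0, matrix2 0 (-1) 0 1),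
     (matrix2 1 0 0 0, matrix2 0 (-1) 0 1, matrix2 0 1 1 0),
     (matrix2 0 0 1 0, matrix2 (-1) 0 1 0, matrix2 1 0 0 1),
     (matrix2 1 0 0 1, matrix2 0 1 0 0, matrix2 (-1) 0 1 0),
     (matrix2 (-1) 1 0 0, matrix2 1 0 0 1, matrix2 0 1 0 0),
     (matrix2 0 0 (-1) 1, matrix2 0 1 1 0, matrix2 1 0 0 0)]"

lemma cnot_cycle_decomposition_7: "\<exists>A B C :: nat \<Rightarrow> mat2. cnot_cycle = (\<Sum>j<7. tensor3 (A j) (B j) (C j))"
proof -
  have decomposition: "cnot_cycle = (\<Sum>j<7. tensor3 (fst (cycle_factors ! j))
      (fst (snd (cycle_factors ! j))) (snd (snd (cycle_factors ! j))))"
    by (simp add: vec_eq_iff cnot_cycle_eq_perm_matrix perm_matrix_def cycle_factors_def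
        eval_nat_numeral tensor3_def split_paired_All forall_2 numeral_2_eq_0)
  show ?thesis
    by (intro exI) (fact decomposition)
qed

section \<open>Bilinear pairing and linear algebra\<close>

definition dot :: "'a::semiring_1^'n \<Rightarrow> 'a^'n \<Rightarrow> 'a" where
  "dot x y = (\<Sum>i\<in>UNIV. x$i * y$i)"

lemma dot_commute: "dot x y = dot y (x :: 'a::comm_semiring_1^'n)"
  by (simp add: dot_def mult.commute)

lemma dot_lincomb: "dot (s *s x + t *s y) z = s * dot x z + t * dot y (z :: 'a::comm_semiring_1^'n)"
  by (simp add: dot_def sum.distrib sum_distrib_left algebra_simps)

lemma dot_scale_right: "dot x (c *s y) = c * dot x (y :: 'a::comm_semiring_1^'n)"
  by (simp add: dot_def sum_distrib_left mult_ac)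

definition outer :: "'a::times^'m \<Rightarrow> 'a^'n \<Rightarrow> 'a^'n^'m" where
  "outer x y = (\<chi> i j. x$i * y$j)"

lemma outer_zero_left [simp]: "outer 0 y = (0 :: 'a::mult_zero^'n^'m)"
  by (simp add: vec_eq_iff outer_def)

lemma outer_mult_vector: "outer x y *v w = dot y w *s (x :: 'a::comm_semiring_1^'m)"
proof -
  have "(outer x y *v w) $ i = x $ i * (\<Sum>j\<in>UNIV. y $ j * w $ j)" for i
    by (simp add: matrix_vector_mult_def outer_def sum_distrib_left mult.assoc)
  then show ?thesis
    by (simp add: vec_eq_iff dot_def mult.commute)
qed

lemma vector_mult_outer: "v v* outer x y = dot v x *s (y :: 'a::comm_semiring_1^'n)"
  by (simp add: vec_eq_iff vector_matrix_mult_def outer_def dot_def sum_distrib_right mult.assoc)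

lemma sum_mult_vector: "finite J \<Longrightarrow> (\<Sum>j\<in>J. M j) *v w = (\<Sum>j\<in>J. M j *v w)"
  by (induction J rule: finite_induct) (simp_all add: matrix_vector_mult_add_rdistrib)

lemma vector_mult_sum: "finite J \<Longrightarrow> v v* (\<Sum>j\<in>J. M j) = (\<Sum>j\<in>J. v v* M j)"
  by (induction J rule: finite_induct)
    (simp_all add: vec_eq_iff vector_matrix_mult_def sum.distrib distrib_left)

lemma not_invertible_if_zero_off_cross:
  fixes G :: "'a::field^'n^'n"
  assumes "i \<noteq> j" "i \<noteq> l" "j \<noteq> l" and zero: "\<And>m n. m \<noteq> l \<Longrightarrow> n \<noteq> l \<Longrightarrow> G $ m $ n = 0"
  shows "\<not> invertible G"
proof -
  have singular: "\<not> invertible G" if "G *v x = 0" "x \<noteq> 0" for x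
    using that by (metis invertible_left_inverse matrix_left_invertible_ker)
  have column_i: "G $ m $ i = 0" and column_j: "G $ m $ j = 0" if "m \<noteq> l" for m
    using zero that assms(2,3) by auto
  show ?thesis
  proof (cases "G $ l $ i = 0 \<and> G $ l $ j = 0")
    case True
    then have "G $ m $ i = 0" for m
      using column_i by (cases "m = l") auto
    then have "G *v axis i 1 = 0"
      by (simp add: vec_eq_iff matrix_vector_mult_def axis_def if_distrib[of "\<lambda>u. _ * u"] cong: if_cong)
    then show ?thesis
      by (rule singular) (simp add: axis_eq_0_iff)
  next
    case False
    define x where "x = G $ l $ j *s axis i 1 - G $ l $ i *s axis j 1"
    have "(G *v x) $ m = G $ l $ j * G $ m $ i - G $ l $ i * G $ m $ j" for m
      by (simp add: matrix_vector_mult_def x_def axis_def right_diff_distrib sum_subtractf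
          if_distrib[of "\<lambda>u. _ * u"] mult.commute cong: if_cong)
    moreover have "G $ l $ j * G $ m $ i - G $ l $ i * G $ m $ j = 0" for m
      using column_i column_j by (cases "m = l") auto
    ultimately have "G *v x = 0"
      by (simp add: vec_eq_iff)
    moreover have "x \<noteq> 0"
      using False assms(1) by (auto simp: x_def vec_eq_iff axis_def)
    ultimately show ?thesis
      by (rule singular)
  qed
qed

lemma orthogonal_vector_exists:
  fixes f :: "'n::finite \<Rightarrow> 'a::field^'n"
  assumes "\<not> inj f"
  obtains w where "w \<noteq> 0" "\<And>i. dot (f i) w = 0"
proof -
  obtain i j where "i \<noteq> j" "f i = f j"
    using assms by (auto simp: inj_def)
  then have "det (\<chi> k. f k) = 0"
    by (intro det_identical_rows[of i j]) (simp_all add: row_def vec_lambda_eta)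
  then obtain w where "(\<chi> k. f k) *v w = 0" "w \<noteq> 0"
    by (metis invertible_det_nz invertible_left_inverse matrix_left_invertible_ker)
  then show thesis
    by (intro that[of w]) (auto simp: vec_eq_iff matrix_vector_mult_def dot_def)
qed

lemma orthogonal_to_three:
  fixes x y z :: "'a::field^(2\<times>2)"
  obtains w where "w \<noteq> 0" "dot x w = 0" "dot y w = 0" "dot z w = 0"
proof -
  define f :: "2\<times>2 \<Rightarrow> 'a^(2\<times>2)" where "f k = (if k = (0,0) then x else if k = (0,1) then y else z)" for k
  have "f (1,0) = f (1,1)" "(1,0) \<noteq> ((1,1) :: 2\<times>2)"
    by (simp_all add: f_def)
  then have "\<not> inj f"
    by (metis injD)
  then obtain w where "w \<noteq> 0" and orthogonal: "\<And>k. dot (f k) w = 0"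
    using orthogonal_vector_exists by blast
  moreover have "x = f (0,0)" "y = f (0,1)" "z = f (1,0)"
    by (simp_all add: f_def)
  ultimately show thesis
    using that by metis
qed

lemma span_range_eq_UNIV:
  fixes a :: "'k::finite \<Rightarrow> 'a::field^'n"
  assumes "\<And>l. (\<And>j. dot l (a j) = 0) \<Longrightarrow> l = 0"
  shows "vec.span (range a) = UNIV"
proof -
  have "rows (\<chi> j. a j) = range a"
    by (auto simp: rows_def row_def vec_lambda_eta)
  moreover have "(\<chi> j. a j) *v l = 0 \<Longrightarrow> l = 0" for l
    using assms[of l] by (simp add: vec_eq_iff matrix_vector_mult_def dot_def mult.commute)
  ultimately show ?thesis
    by (metis matrix_left_invertible_ker matrix_left_invertible_span_rows_gen)
qed

lemma dual_basis_exists: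
  fixes a :: "'k::finite \<Rightarrow> 'a::field^'n"
  assumes "vec.span (range a) = UNIV"
  obtains \<iota> :: "'n \<Rightarrow> 'k" and B :: "'a^'n^'n"
  where "inj \<iota>" "invertible B" "\<And>k m. dot (column m B) (a (\<iota> k)) = (if k = m then 1 else 0)"
proof -
  obtain S where S: "S \<subseteq> range a" "vec.independent S" "range a \<subseteq> vec.span S"
    using vec.maximal_independent_subset by blast
  then have "vec.span S = UNIV"
    using assms vec.span_mono vec.span_span by (metis top.extremum_unique)
  then have "card S = CARD('n)"
    using S(2) vec.basis_card_eq_dim[of S UNIV] vec_dim_card by auto
  obtain J where J: "inj_on a J" "S = a ` J"
    using S(1) subset_image_inj by metis
  then have "card J = CARD('n)"
    using \<open>card S = CARD('n)\<close> card_image by metis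
  then obtain \<iota> :: "'n \<Rightarrow> 'k" where \<iota>: "bij_betw \<iota> UNIV J"
    using finite_same_card_bij[of "UNIV :: 'n set" J] by auto
  define A :: "'a^'n^'n" where "A = (\<chi> k. a (\<iota> k))"
  have "rows A = S"
    using \<iota> J(2) by (auto simp: A_def rows_def row_def vec_lambda_eta bij_betw_def)
  then obtain B where "B ** A = mat 1"
    using \<open>vec.span S = UNIV\<close> matrix_left_invertible_span_rows_gen by blast
  then have "A ** B = mat 1"
    by (simp add: matrix_left_right_inverse)
  show thesis
  proof
    show "inj \<iota>"
      using \<iota> by (simp add: bij_betw_def)
    show "invertible B"
      using \<open>B ** A = mat 1\<close> \<open>A ** B = mat 1\<close> by (auto simp: invertible_def)
    show "dot (column m B) (a (\<iota> k)) = (if k = m then 1 else 0)" for k m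
      using arg_cong[OF \<open>A ** B = mat 1\<close>, of "\<lambda>M. M $ k $ m"]
      by (simp add: matrix_matrix_mult_def A_def dot_def column_def mat_def mult.commute)
  qed
qed

lemma subset_pair_if_card_le_2:
  assumes "finite S" "card S \<le> 2"
  obtains a b where "S \<subseteq> {a, b}"
proof -
  consider "card S = 0" | "card S = 1" | "card S = 2"
    using assms(2) by linarith
  then show thesis
  proof cases
    case 1
    then have "S = {}"
      using assms(1) by simp
    then show thesis
      using that[of undefined undefined] by simp
  next
    case 2
    then obtain a where "S = {a}"
      by (auto simp: card_1_singleton_iff)
    then show thesis
      using that[of a a] by simp
  next
    case 3
    then obtain a b where "S = {a, b}"
      by (auto simp: card_2_iff)
    then show thesis
      using that[of a b] by simp
  qed
qed

section \<open>Slices of the CNOT cycle\<close>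

definition flatten :: "'a^'n^'m \<Rightarrow> 'a^('m \<times> 'n)" where
  "flatten A = (\<chi> x. A $ fst x $ snd x)"

lemma tensor3_zero_left [simp]: "tensor3 0 B C = 0"
  by (simp add: vec_eq_iff tensor3_def)

text \<open>Pairing the A-factor of \<open>M\<close> with \<open>l\<close> leaves a matrix whose rows and columns are indexed
  by the entries of operators on B and on C, respectively.\<close>

definition contract_A :: "complex^(2\<times>2) \<Rightarrow> mat8 \<Rightarrow> complex^(2\<times>2)^(2\<times>2)" where
  "contract_A l M = (\<chi> i j. \<Sum>x\<in>UNIV. l$x * M $ (fst x, fst i, fst j) $ (snd x, snd i, snd j))"

lemma contract_A_tensor3:
  "contract_A l (tensor3 A B C) = outer (dot l (flatten A) *s flatten B) (flatten C)"
  by (simp add: vec_eq_iff contract_A_def tensor3_def outer_def dot_def flatten_def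
      sum_distrib_left mult_ac)

lemma contract_A_sum:
  "finite J \<Longrightarrow> contract_A l (\<Sum>j\<in>J. M j) = (\<Sum>j\<in>J. contract_A l (M j))"
  by (simp add: vec_eq_iff contract_A_def sum_distrib_left sum.swap[of _ J])

definition cnot_slice :: "'a::zero^(2\<times>2) \<Rightarrow> 'a^(2\<times>2)^(2\<times>2)" where
  "cnot_slice l = (\<chi> i j. if fst j = snd i + snd j then l $ (fst i + snd i, fst i + snd i + snd j) else 0)"

lemma contract_A_cnot_cycle: "contract_A l cnot_cycle = cnot_slice l"
  by (auto simp: vec_eq_iff contract_A_def cnot_slice_def cnot_cycle_eq_perm_matrix perm_matrix_def
      sum_UNIV_2x2 forall_2 numeral_2_eq_0)

lemma cnot_slice_eq_0_iff: "cnot_slice l = 0 \<longleftrightarrow> l = (0::'a::zero^(2\<times>2))"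
proof
  assume "cnot_slice l = 0"
  then have "cnot_slice l $ (p, 0) $ (p + a, p + a) = 0" for p a
    by simp
  then show "l = 0"
    by (simp add: vec_eq_iff cnot_slice_def)
qed (simp add: vec_eq_iff cnot_slice_def)

definition block :: "'a^(2\<times>2) \<Rightarrow> 'a^2^2" where
  "block l = (\<chi> t c. l $ (t, t + c))"

definition quadform :: "'a::comm_ring_1^(2\<times>2) \<Rightarrow> 'a" where
  "quadform l = l$(0,0) * l$(1,0) - l$(0,1) * l$(1,1)"

lemma block_eq_0_iff: "block l = 0 \<longleftrightarrow> l = (0::'a::zero^(2\<times>2))"
proof
  assume "block l = 0"
  then have "l $ (i, i + (i + j)) = 0" for i j
    by (simp only: vec_eq_iff block_def vec_lambda_beta zero_index)
  then show "l = 0"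
    by (simp add: vec_eq_iff)
qed (simp add: vec_eq_iff block_def)

lemma det_block: "det (block l) = quadform l"
  by (simp add: det_2 block_def quadform_def numeral_2_eq_0 mult.commute)

text \<open>Up to permuting rows and columns, \<open>cnot_slice l\<close> is the direct sum of two copies of
  \<open>block l\<close>; \<open>shifted_diagonal\<close> and \<open>shifted_column\<close> extract the parts of a kernel
  and a cokernel vector that meet one copy.\<close>

definition shifted_diagonal :: "2 \<Rightarrow> 'a^(2\<times>2) \<Rightarrow> 'a^2" where
  "shifted_diagonal b w = (\<chi> c. w $ (b + c, c))"

definition shifted_column :: "2 \<Rightarrow> 'a^(2\<times>2) \<Rightarrow> 'a^2" where
  "shifted_column s v = (\<chi> t. v $ (t + s, s))"

lemma shifted_diagonal_nonzero:
  assumes "w \<noteq> (0::'a::zero^(2\<times>2))"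
  obtains b where "shifted_diagonal b w \<noteq> 0"
proof -
  obtain i j where "w $ (i, j) \<noteq> 0"
    using assms by (auto simp: vec_eq_iff)
  then have "shifted_diagonal (i + j) w $ j \<noteq> 0"
    by (simp add: shifted_diagonal_def add.assoc)
  then show thesis
    using that by force
qed

lemma shifted_column_nonzero:
  assumes "v \<noteq> (0::'a::zero^(2\<times>2))"
  obtains s where "shifted_column s v \<noteq> 0"
proof -
  obtain i j where "v $ (i, j) \<noteq> 0"
    using assms by (auto simp: vec_eq_iff)
  then have "shifted_column j v $ (i + j) \<noteq> 0"
    by (simp add: shifted_column_def add.assoc)
  then show thesis
    using that by force
qed

lemma cnot_slice_mult_vector:
  "(cnot_slice l *v w) $ (t + b, b) = (block l *v shifted_diagonal b w) $ t"
  using bit_cases[of b] by (auto simp: matrix_vector_mult_def cnot_slice_def block_def shifted_diagonal_def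
      sum_UNIV_2x2 sum_UNIV_2 add_ac)

lemma vector_mult_cnot_slice:
  "(v v* cnot_slice l) $ (s + c, c) = (shifted_column s v v* block l) $ c"
  using bit_cases[of s] by (auto simp: vector_matrix_mult_def cnot_slice_def block_def
      shifted_column_def sum_UNIV_2x2 sum_UNIV_2 add_ac)

lemma quadform_eq_0_if_block_singular:
  assumes "block l *v d = 0" "d \<noteq> 0"
  shows "quadform (l :: 'a::field^(2\<times>2)) = 0"
  using assms by (metis det_block invertible_det_nz invertible_left_inverse matrix_left_invertible_ker)

lemma quadform_eq_0_if_cnot_slice_singular:
  assumes "cnot_slice l *v w = 0" "w \<noteq> 0"
  shows "quadform (l :: 'a::field^(2\<times>2)) = 0"
proof -
  obtain b where "shifted_diagonal b w \<noteq> 0"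
    using shifted_diagonal_nonzero[OF assms(2)] .
  moreover have "block l *v shifted_diagonal b w = 0"
    using assms(1) by (metis cnot_slice_mult_vector vec_eq_iff zero_index)
  ultimately show ?thesis
    by (rule quadform_eq_0_if_block_singular[rotated])
qed

lemma matrix_2x2_eq_0_if_annihilated:
  fixes M :: "'a::field^2^2"
  assumes "M *v p = 0" "n v* M = 0" "p $ (j + 1) \<noteq> 0" "n $ (i + 1) \<noteq> 0" "M $ i $ j = 0"
  shows "M = 0"
proof -
  have row: "M $ a $ j * p $ j + M $ a $ (j + 1) * p $ (j + 1) = 0" for a
    using assms(1) by (simp add: vec_eq_iff matrix_vector_mult_def sum_UNIV_2_shift[of _ j])
  have column: "n $ i * M $ i $ j + n $ (i + 1) * M $ (i + 1) $ j = 0"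
    using assms(2) by (simp add: vec_eq_iff vector_matrix_mult_def sum_UNIV_2_shift[of _ i])
  have "M $ i $ (j + 1) = 0" "M $ (i + 1) $ j = 0"
    using row[of i] column assms(3-5) by simp_all
  moreover have "M $ (i + 1) $ (j + 1) = 0"
    using row[of "i + 1"] \<open>M $ (i + 1) $ j = 0\<close> assms(3) by simp
  ultimately have "M $ a $ b = 0" for a b
    using assms(5) bit_cases_shift[of a i] bit_cases_shift[of b j] by auto
  then show ?thesis
    by (simp add: vec_eq_iff)
qed

lemma block_annihilated_dependent:
  fixes x y :: "'a::field^(2\<times>2)"
  assumes "p \<noteq> 0" "n \<noteq> 0" "block x *v p = 0" "block y *v p = 0" "n v* block x = 0" "n v* block y = 0"
  shows "\<exists>s t. (s \<noteq> 0 \<or> t \<noteq> 0) \<and> s *s x + t *s y = 0"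
proof -
  have nonzero_entry: "\<exists>k. u $ (k + 1) \<noteq> 0" if nonzero: "u \<noteq> 0" for u :: "'a^2"
  proof -
    obtain k where "u $ k \<noteq> 0"
      using nonzero by (auto simp: vec_eq_iff)
    then show ?thesis
      by (metis add_one_one_2)
  qed
  obtain j where j: "p $ (j + 1) \<noteq> 0"
    using nonzero_entry[OF assms(1)] ..
  obtain i where i: "n $ (i + 1) \<noteq> 0"
    using nonzero_entry[OF assms(2)] ..
  have eq_0: "z = 0" if "block z *v p = 0" "n v* block z = 0" "block z $ i $ j = 0" for z
    using matrix_2x2_eq_0_if_annihilated[OF that(1,2) j i that(3)] by (simp add: block_eq_0_iff)
  show ?thesis
  proof (cases "block x $ i $ j = 0")
    case True
    then show ?thesis
      using eq_0[of x] assms(3,5) by (intro exI[of _ 1] exI[of _ 0]) simp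
  next
    case False
    define s t where "s = block y $ i $ j" and "t = - block x $ i $ j"
    define z where "z = s *s x + t *s y"
    have entry: "block z $ a $ b = s * block x $ a $ b + t * block y $ a $ b" for a b
      by (simp add: z_def block_def)
    have "block z *v p = s *s (block x *v p) + t *s (block y *v p)"
      by (simp add: vec_eq_iff matrix_vector_mult_def entry sum.distrib sum_distrib_left algebra_simps)
    then have "block z *v p = 0"
      by (simp add: assms(3,4))
    moreover have "n v* block z = s *s (n v* block x) + t *s (n v* block y)"
      by (simp add: vec_eq_iff vector_matrix_mult_def entry sum.distrib sum_distrib_left algebra_simps)
    then have "n v* block z = 0"
      by (simp add: assms(5,6))
    moreover have "block z $ i $ j = 0"
      by (simp add: entry s_def t_def)
    ultimately have "s *s x + t *s y = 0"
      unfolding z_def by (rule eq_0)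
    moreover have "t \<noteq> 0"
      using False by (simp add: t_def)
    ultimately show ?thesis
      by (intro exI[of _ s] exI[of _ t]) simp
  qed
qed

lemma cnot_slice_annihilated_dependent:
  fixes x y :: "'a::field^(2\<times>2)"
  assumes "w \<noteq> 0" "v \<noteq> 0"
    and "cnot_slice x *v w = 0" "cnot_slice y *v w = 0" "v v* cnot_slice x = 0" "v v* cnot_slice y = 0"
  shows "\<exists>s t. (s \<noteq> 0 \<or> t \<noteq> 0) \<and> s *s x + t *s y = 0"
proof -
  obtain b where diagonal: "shifted_diagonal b w \<noteq> 0"
    using shifted_diagonal_nonzero[OF assms(1)] .
  obtain s where column: "shifted_column s v \<noteq> 0"
    using shifted_column_nonzero[OF assms(2)] .
  have kernel: "block l *v shifted_diagonal b w = 0" if "cnot_slice l *v w = 0" for l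
    using that by (metis cnot_slice_mult_vector vec_eq_iff zero_index)
  have cokernel: "shifted_column s v v* block l = 0" if "v v* cnot_slice l = 0" for l
    using that by (metis vector_mult_cnot_slice vec_eq_iff zero_index)
  show ?thesis
    by (rule block_annihilated_dependent[OF diagonal column kernel[OF assms(3)] kernel[OF assms(4)]
          cokernel[OF assms(5)] cokernel[OF assms(6)]])
qed

section \<open>The polar form of the determinant\<close>

definition polar :: "'a::comm_ring_1^(2\<times>2) \<Rightarrow> 'a^(2\<times>2) \<Rightarrow> 'a" where
  "polar x y = x$(0,0) * y$(1,0) + x$(1,0) * y$(0,0) - x$(0,1) * y$(1,1) - x$(1,1) * y$(0,1)"

lemma polar_self: "polar x x = 2 * quadform x"
  by (simp add: polar_def quadform_def algebra_simps)

lemma quadform_lincomb: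
  "quadform (s *s x + t *s y) = s\<^sup>2 * quadform x + t\<^sup>2 * quadform y + s * t * polar x y"
  by (simp add: quadform_def polar_def power2_eq_square algebra_simps)

definition polar_matrix :: "'a::comm_ring_1^(2\<times>2)^(2\<times>2)" where
  "polar_matrix = (\<chi> i j. polar (axis i 1) (axis j 1))"

lemma polar_matrix_involution: "polar_matrix ** polar_matrix = (mat 1 :: 'a::comm_ring_1^(2\<times>2)^(2\<times>2))"
  by (auto simp: vec_eq_iff matrix_matrix_mult_def polar_matrix_def polar_def axis_def mat_def
      sum_UNIV_2x2 forall_2 numeral_2_eq_0)

lemma gram_polar_matrix:
  "(transpose B ** polar_matrix ** B) $ m $ n = polar (column m B) (column n B)"
  by (simp add: matrix_matrix_mult_def transpose_def polar_matrix_def polar_def axis_def column_def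
      sum_UNIV_2x2 algebra_simps)

section \<open>No decomposition into six product terms\<close>

text \<open>The vectors \<open>aa (\<iota> k)\<close> form a basis whose dual basis consists of the columns of
  \<open>B\<close>; \<open>e1\<close> and \<open>e2\<close> index the remaining (at most two) terms.\<close>

locale cnot_slice_dual_decomposition =
  fixes aa bb cc :: "'k::finite \<Rightarrow> 'a::field^(2\<times>2)"
    and \<iota> :: "2\<times>2 \<Rightarrow> 'k" and B :: "'a^(2\<times>2)^(2\<times>2)" and e1 e2 :: 'k
  assumes slice_decomposition: "\<And>l. cnot_slice l = (\<Sum>j\<in>UNIV. outer (dot l (aa j) *s bb j) (cc j))"
    and dual: "\<And>k m. dot (column m B) (aa (\<iota> k)) = (if k = m then 1 else 0)"
    and covered: "\<And>j. j \<in> range \<iota> \<or> j = e1 \<or> j = e2"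
begin

lemma cnot_slice_mult_vector_eq_0:
  assumes "\<And>j. dot l (aa j) = 0 \<or> dot (cc j) w = 0"
  shows "cnot_slice l *v w = 0"
  unfolding slice_decomposition sum_mult_vector[OF finite] outer_mult_vector
  by (rule sum.neutral) (use assms in auto)

lemma vector_mult_cnot_slice_eq_0:
  assumes "\<And>j. dot l (aa j) = 0 \<or> dot v (bb j) = 0"
  shows "v v* cnot_slice l = 0"
  unfolding slice_decomposition vector_mult_sum[OF finite] vector_mult_outer dot_scale_right
  by (rule sum.neutral) (use assms in auto)

lemma dual_coefficient_eq_0:
  assumes "j \<noteq> \<iota> m" "j \<noteq> e1" "j \<noteq> e2"
  shows "dot (column m B) (aa j) = 0"
proof -
  obtain k where "j = \<iota> k"
    using covered[of j] assms(2,3) by auto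
  moreover have "k \<noteq> m"
    using assms(1) calculation by auto
  ultimately show ?thesis
    by (simp add: dual)
qed

lemma two_vanishing_coefficients_impossible:
  assumes "i \<noteq> j" "dot (column i B) (aa e2) = 0" "dot (column j B) (aa e2) = 0"
  shows False
proof -
  obtain w where w: "w \<noteq> 0" "dot (cc (\<iota> i)) w = 0" "dot (cc (\<iota> j)) w = 0" "dot (cc e1) w = 0"
    by (rule orthogonal_to_three)
  obtain v where v: "v \<noteq> 0" "dot (bb (\<iota> i)) v = 0" "dot (bb (\<iota> j)) v = 0" "dot (bb e1) v = 0"
    by (rule orthogonal_to_three)
  have vanishing: "dot (column m B) (aa k) = 0" if "m \<in> {i, j}" "k \<notin> {\<iota> i, \<iota> j, e1}" for m k
    using that assms(2,3) dual_coefficient_eq_0[of k m] by auto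
  have annihilated: "cnot_slice (column m B) *v w = 0" "v v* cnot_slice (column m B) = 0"
    if "m \<in> {i, j}" for m
  proof -
    show "cnot_slice (column m B) *v w = 0"
      by (rule cnot_slice_mult_vector_eq_0, rename_tac k, case_tac "k \<in> {\<iota> i, \<iota> j, e1}")
        (use that w vanishing in auto)
    show "v v* cnot_slice (column m B) = 0"
      by (rule vector_mult_cnot_slice_eq_0, rename_tac k, case_tac "k \<in> {\<iota> i, \<iota> j, e1}")
        (use that v vanishing in \<open>auto simp: dot_commute[of v]\<close>)
  qed
  obtain s t where nontrivial: "s \<noteq> 0 \<or> t \<noteq> 0" and dependent: "s *s column i B + t *s column j B = 0"
    using cnot_slice_annihilated_dependent[OF w(1) v(1) annihilated(1)[of i] annihilated(1)[of j]
        annihilated(2)[of i] annihilated(2)[of j]] by auto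
  have "s = dot (s *s column i B + t *s column j B) (aa (\<iota> i))"
    "t = dot (s *s column i B + t *s column j B) (aa (\<iota> j))"
    using assms(1) by (simp_all add: dot_lincomb dual)
  then show False
    using nontrivial unfolding dependent by (simp add: dot_def)
qed

lemma quadform_dual_eq_0: "quadform (column m B) = 0"
proof -
  obtain w where w: "w \<noteq> 0" "dot (cc (\<iota> m)) w = 0" "dot (cc e1) w = 0" "dot (cc e2) w = 0"
    by (rule orthogonal_to_three)
  have "cnot_slice (column m B) *v w = 0"
    by (rule cnot_slice_mult_vector_eq_0, rename_tac k, case_tac "k \<in> {\<iota> m, e1, e2}")
      (use w dual_coefficient_eq_0 in auto)
  then show ?thesis
    using w(1) by (rule quadform_eq_0_if_cnot_slice_singular)
qed

lemma polar_dual_eq_0: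
  assumes "m \<noteq> n" "dot (column m B) (aa e2) \<noteq> 0" "dot (column n B) (aa e2) \<noteq> 0"
  shows "polar (column m B) (column n B) = 0"
proof -
  define c d where "c = dot (column n B) (aa e2)" and "d = - dot (column m B) (aa e2)"
  \<comment> \<open>\<open>l\<close> pairs to zero with \<open>aa e2\<close>, so its slice involves only three terms.\<close>
  define l where "l = c *s column m B + d *s column n B"
  obtain w where w: "w \<noteq> 0" "dot (cc (\<iota> m)) w = 0" "dot (cc (\<iota> n)) w = 0" "dot (cc e1) w = 0"
    by (rule orthogonal_to_three)
  have vanishing: "dot l (aa k) = 0" if "k \<notin> {\<iota> m, \<iota> n, e1}" for k
  proof (cases "k = e2")
    case True
    then show ?thesis
      by (simp add: l_def dot_lincomb) (simp add: c_def d_def)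
  next
    case False
    then show ?thesis
      using that by (simp add: l_def dot_lincomb dual_coefficient_eq_0)
  qed
  have "cnot_slice l *v w = 0"
    by (rule cnot_slice_mult_vector_eq_0, rename_tac k, case_tac "k \<in> {\<iota> m, \<iota> n, e1}")
      (use w vanishing in auto)
  then have "quadform l = 0"
    using w(1) by (rule quadform_eq_0_if_cnot_slice_singular)
  then have "c * d * polar (column m B) (column n B) = 0"
    by (simp add: l_def quadform_lincomb quadform_dual_eq_0)
  then show ?thesis
    using assms(2,3) by (simp add: c_def d_def)
qed

end

lemma no_short_cnot_slice_decomposition:
  fixes aa bb cc :: "'k::finite \<Rightarrow> 'a::field^(2\<times>2)"
  assumes "CARD('k) \<le> 6"
    and slice_decomposition: "\<And>l. cnot_slice l = (\<Sum>j\<in>UNIV. outer (dot l (aa j) *s bb j) (cc j))"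
  shows False
proof -
  have span: "vec.span (range aa) = UNIV"
  proof (rule span_range_eq_UNIV)
    fix l assume "\<And>j. dot l (aa j) = 0"
    then have "cnot_slice l = 0"
      by (simp add: slice_decomposition)
    then show "l = 0"
      by (simp add: cnot_slice_eq_0_iff)
  qed
  then obtain \<iota> :: "2\<times>2 \<Rightarrow> 'k" and B :: "'a^(2\<times>2)^(2\<times>2)" where "inj \<iota>" "invertible B"
    and dual: "\<And>k m. dot (column m B) (aa (\<iota> k)) = (if k = m then 1 else 0)"
    using dual_basis_exists by blast
  have "card (UNIV - range \<iota>) \<le> 2"
    using assms(1) \<open>inj \<iota>\<close> by (simp add: card_Diff_subset card_image)
  then obtain e1 e2 where "UNIV - range \<iota> \<subseteq> {e1, e2}"
    using subset_pair_if_card_le_2[of "UNIV - range \<iota>"] by auto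
  then have covered: "j \<in> range \<iota> \<or> j = e1 \<or> j = e2" for j
    by blast
  interpret cnot_slice_dual_decomposition aa bb cc \<iota> B e1 e2
    using slice_decomposition dual covered by unfold_locales
  define coefficient where "coefficient m = dot (column m B) (aa e2)" for m
  consider (two_zeros) i j where "i \<noteq> j" "coefficient i = 0" "coefficient j = 0"
    | (one_zero) l where "\<And>m. m \<noteq> l \<Longrightarrow> coefficient m \<noteq> 0"
    by blast
  then show False
  proof cases
    case two_zeros
    then show False
      using two_vanishing_coefficients_impossible by (simp add: coefficient_def)
  next
    case one_zero
    define G where "G = transpose B ** polar_matrix ** B"
    have "G $ m $ n = 0" if "m \<noteq> l" "n \<noteq> l" for m n
    proof (cases "m = n")
      case True
      then show ?thesis
        by (simp add: G_def gram_polar_matrix polar_self quadform_dual_eq_0)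
    next
      case False
      then show ?thesis
        using that one_zero polar_dual_eq_0 by (simp add: G_def gram_polar_matrix coefficient_def)
    qed
    then have "\<not> invertible G"
      by (rule not_invertible_if_zero_off_cross[of "(fst l + 1, snd l)" "(fst l, snd l + 1)", rotated 3])
        (auto simp: prod_eq_iff)
    moreover have "invertible G"
    proof -
      obtain B' where "B ** B' = mat 1" "B' ** B = mat 1"
        using \<open>invertible B\<close> by (auto simp: invertible_def)
      then have "transpose B' ** transpose B = mat 1" "transpose B ** transpose B' = mat 1"
        by (simp_all flip: matrix_transpose_mul)
      then have "invertible (transpose B)"
        by (auto simp: invertible_def)
      moreover have "invertible (polar_matrix :: 'a^(2\<times>2)^(2\<times>2))"
        using polar_matrix_involution by (auto simp: invertible_def)
      ultimately show ?thesis
        unfolding G_def using \<open>invertible B\<close> by (intro invertible_mult)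
    qed
    ultimately show False
      by contradiction
  qed
qed

lemma cnot_cycle_decomposition_length_ge_7:
  fixes r :: nat and A B C :: "nat \<Rightarrow> mat2"
  assumes "cnot_cycle = (\<Sum>j<r. tensor3 (A j) (B j) (C j))"
  shows "7 \<le> r"
proof (rule ccontr)
  assume "\<not> 7 \<le> r"
  obtain \<nu> :: "6 \<Rightarrow> nat" where \<nu>: "bij_betw \<nu> UNIV {..<6}"
    using finite_same_card_bij[of "UNIV :: 6 set" "{..<6::nat}"] by auto
  define A' where "A' j = (if j < r then A j else 0)" for j
  have "cnot_cycle = (\<Sum>j<6. tensor3 (A' j) (B j) (C j))"
    unfolding assms using \<open>\<not> 7 \<le> r\<close>
    by (intro sum.mono_neutral_cong_left) (auto simp: A'_def)
  also have "\<dots> = (\<Sum>k\<in>UNIV. tensor3 (A' (\<nu> k)) (B (\<nu> k)) (C (\<nu> k)))"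
    by (rule sum.reindex_bij_betw[OF \<nu>, symmetric])
  finally have decomposition: "cnot_cycle = (\<Sum>k\<in>UNIV. tensor3 (A' (\<nu> k)) (B (\<nu> k)) (C (\<nu> k)))" .
  have "cnot_slice l
      = (\<Sum>k\<in>UNIV. outer (dot l (flatten (A' (\<nu> k))) *s flatten (B (\<nu> k))) (flatten (C (\<nu> k))))" for l
    unfolding contract_A_cnot_cycle[symmetric] decomposition by (simp add: contract_A_sum contract_A_tensor3)
  then show False
    by (rule no_short_cnot_slice_decomposition[rotated]) simp
qed

lemma schmidt_rank_eqI:
  assumes "\<exists>A B C. U = (\<Sum>j<n. tensor3 (A j) (B j) (C j))"
    and "\<And>r A B C. U = (\<Sum>j<r. tensor3 (A j) (B j) (C j)) \<Longrightarrow> n \<le> r"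
  shows "schmidt_rank U = n"
  unfolding schmidt_rank_def by (rule Least_equality) (use assms in blast)+

lemma local_unitary_mat_1: "local_unitary (mat 1)"
proof -
  have "conj_transpose2 id2 = id2"
    by (simp add: conj_transpose2_def id2_def mat_def vec_eq_iff)
  then have "unitary2 id2"
    by (simp add: unitary2_def id2_def)
  moreover have "tensor3 id2 id2 id2 = mat 1"
    by (auto simp: vec_eq_iff tensor3_def id2_def mat_def)
  ultimately show ?thesis
    unfolding local_unitary_def by metis
qed

theorem theorem7:
  shows "\<exists>L1 L2 L3 L4 :: mat8.
           local_unitary L1 \<and> local_unitary L2 \<and> local_unitary L3 \<and> local_unitary L4 \<and>
           schmidt_rank (L1 ** CNOT_AB ** L2 ** CNOT_BC ** L3 ** CNOT_CA ** L4) = 7"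
proof -
  have "schmidt_rank cnot_cycle = 7"
    by (rule schmidt_rank_eqI[OF cnot_cycle_decomposition_7 cnot_cycle_decomposition_length_ge_7])
  then show ?thesis
    using local_unitary_mat_1 by (intro exI[of _ "mat 1"]) (simp add: cnot_cycle_def)
qed

end
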